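(* Let $k=0$ and let $a$ be a regular scale factor which is an even function on $\mathbb R$, such that either $\infty>\dot a(0^+)>0$, or $\dot a(0)=0$ but $a^{(n)}(0)\ne0$ for some $n$. Then for every $\tau>0$ and every $(x,y,z)$ with $\sqrt{x^2+y^2+z^2}=\rho_{\mathcal M_\tau}$, the $4\times4$ matrix \[ \begin{pmatrix} g_{\tau\tau} & 0 & 0 & 0\\ 0 & 1+\lambda_0(y^2+z^2) & -\lambda_0xy & -\lambda_0xz\\ 0 & -\lambda_0xy & 1+\lambda_0(x^2+z^2) & -\lambda_0yz\\ 0 & -\lambda_0xz & -\lambda_0yz & 1+\lambda_0(x^2+y^2)\end{pmatrix}, \] with $g_{\tau\tau}=g_{\tau\tau}(\tau,\rho_{\mathcal M_\tau})$ and $\lambda_0=\lambda_0(\tau,\rho_{\mathcal M_\tau})$, has rank $2$. Thus the cotangent space at each point of the cosmological-time-zero set is two dimensional.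
   Context: A function $a:[0,\infty)\to[0,\infty)$ is a regular scale factor if: (a) $a(0)=0$; (b) $a$ is increasing and continuous on $[0,\infty)$, twice continuously differentiable on $(0,\infty)$, with an inverse function on $[0,\infty)$; (c) $\frac{a(t)\ddot a(t)}{\dot a(t)^2}\le1$ for all $t>0$ (presupposing $\dot a(t)\ne0$). Here $a$ is regarded on $\mathbb R$ via $a(-t)=a(t)$; $\dot a(0^+)=\lim_{t\to0^+}\dot a(t)$. For $0<s<\tau$, $\chi_s(\tau)=\int_s^\tau\frac{1}{a(t)}\frac{a(\tau)}{\sqrt{a^2(\tau)-a^2(t)}}dt$. For $\tau>0$, $\rho_{\mathcal M_\tau}=\int_0^\tau\frac{a(t)}{\sqrt{a^2(\tau)-a^2(t)}}dt$; for $0<\rho<2\rho_{\mathcal M_\tau}$, $t_0(\tau,\rho)$ is the unique $t_0\in(-\tau,\tau)$ with $\rho=\int_{t_0}^\tau\frac{a(t)}{\sqrt{a^2(\tau)-a^2(t)}}dt$ ($t_0=0$ iff $\rho=\rho_{\mathcal M_\tau}$). Define $f(\tau,t_0)=\int_{t_0}^{\tau}\frac{\ddot a(t)}{\dot a(t)^2}\left(\frac{\sqrt{a^2(\tau)-a^2(t_0)}}{\sqrt{a^2(\tau)-a^2(t)}}-1\right)dt$ for $0\le t_0<\tau$ and $g_{\tau\tau}(\tau,\rho)=-[1-\dot a(\tau)f(\tau,t_0(\tau,\rho))]^2$, so $g_{\tau\tau}(\tau,\rho_{\mathcal M_\tau})=-[1-\dot a(\tau)f(\tau,0)]^2$. For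 $t_0=t_0(\tau,\rho)\ne0$, $g_{\theta\theta}(\tau,\rho)=a^2(t_0)\chi_{|t_0|}(\tau)^2$, and $g_{\theta\theta}(\tau,\rho_{\mathcal M_\tau})$ is the limit as $t_0\to0$. $\lambda_0(\tau,\rho)=\frac{g_{\theta\theta}(\tau,\rho)-\rho^2}{\rho^4}$. The displayed matrix is the extended spatially flat Robertson–Walker metric in Fermi coordinates $(\tau,x,y,z)$ of a comoving observer, with $\rho=\sqrt{x^2+y^2+z^2}$. *)

theory Defs
  imports "HOL-Analysis.Analysis"
begin

text \<open>A function a : real => real; only its values on [0,oo) matter for regularity,
  and it is extended evenly to the reals (a(-t) = a(t)), assumed separately.\<close>

definition regular_scale_factor :: "(real \<Rightarrow> real) \<Rightarrow> bool" where
  "regular_scale_factor a \<longleftrightarrow>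
     a 0 = 0 \<and>
     (\<forall>t\<ge>0. a t \<ge> 0) \<and>
     strict_mono_on {0..} a \<and>
     continuous_on {0..} a \<and>
     (\<forall>t>0. a differentiable at t \<and> deriv a differentiable at t) \<and>
     continuous_on {0<..} (deriv (deriv a)) \<and>
     bij_betw a {0..} {0..} \<and>
     (\<forall>t>0. deriv a t \<noteq> 0 \<and> a t * deriv (deriv a) t / (deriv a t)\<^sup>2 \<le> 1)"

definition has_nth_deriv_at :: "(real \<Rightarrow> real) \<Rightarrow> nat \<Rightarrow> real \<Rightarrow> bool" where
  "has_nth_deriv_at f n x \<longleftrightarrow>
     (\<exists>e>0. \<forall>k < n - 1. \<forall>y \<in> ball x e. (deriv ^^ k) f differentiable at y) \<and>
     (n > 0 \<longrightarrow> (deriv ^^ (n - 1)) f differentiable at x)"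

definition rho_M :: "(real \<Rightarrow> real) \<Rightarrow> real \<Rightarrow> real" where
  "rho_M a \<tau> = integral {0..\<tau>} (\<lambda>t. a t / sqrt ((a \<tau>)\<^sup>2 - (a t)\<^sup>2))"

definition chi :: "(real \<Rightarrow> real) \<Rightarrow> real \<Rightarrow> real \<Rightarrow> real" where
  "chi a s \<tau> = integral {s..\<tau>} (\<lambda>t. (1 / a t) * (a \<tau> / sqrt ((a \<tau>)\<^sup>2 - (a t)\<^sup>2)))"

definition f_fun :: "(real \<Rightarrow> real) \<Rightarrow> real \<Rightarrow> real \<Rightarrow> real" where
  "f_fun a \<tau> t0 = integral {t0..\<tau>}
     (\<lambda>t. deriv (deriv a) t / (deriv a t)\<^sup>2 *
          (sqrt ((a \<tau>)\<^sup>2 - (a t0)\<^sup>2) / sqrt ((a \<tau>)\<^sup>2 - (a t)\<^sup>2) - 1))"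

text \<open>Metric components at rho = rho_M(tau) (where t0 = 0).\<close>
definition g_tautau_M :: "(real \<Rightarrow> real) \<Rightarrow> real \<Rightarrow> real" where
  "g_tautau_M a \<tau> = - (1 - deriv a \<tau> * f_fun a \<tau> 0)\<^sup>2"

definition g_thth_M :: "(real \<Rightarrow> real) \<Rightarrow> real \<Rightarrow> real" where
  "g_thth_M a \<tau> = Lim (at 0) (\<lambda>t0. (a t0)\<^sup>2 * (chi a \<bar>t0\<bar> \<tau>)\<^sup>2)"

definition lambda0_M :: "(real \<Rightarrow> real) \<Rightarrow> real \<Rightarrow> real" where
  "lambda0_M a \<tau> = (g_thth_M a \<tau> - (rho_M a \<tau>)\<^sup>2) / (rho_M a \<tau>) ^ 4"

definition metric_matrix :: "real \<Rightarrow> real \<Rightarrow> real \<Rightarrow> real \<Rightarrow> real \<Rightarrow> real^4^4" where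
  "metric_matrix g l x y z = vector [
     vector [g, 0, 0, 0],
     vector [0, 1 + l * (y\<^sup>2 + z\<^sup>2), - l * x * y, - l * x * z],
     vector [0, - l * x * y, 1 + l * (x\<^sup>2 + z\<^sup>2), - l * y * z],
     vector [0, - l * x * z, - l * y * z, 1 + l * (x\<^sup>2 + y\<^sup>2)]]"

end

theory Submission
  imports Defs
begin

text \<open>
  At \<open>\<rho> = \<rho>\<^sub>M(\<tau>)\<close> the relevant geodesic starts at \<open>t\<^sub>0 = 0\<close>, where \<open>a\<close> vanishes, and
  \<open>a(t\<^sub>0) \<chi>\<^bsub>t\<^sub>0\<^esub>(\<tau>)\<close> tends to \<open>0\<close> because \<open>\<chi>\<^bsub>t\<^sub>0\<^esub>(\<tau>)\<close> grows at most like \<open>1/a(t\<^sub>0)\<close>.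
  Hence \<open>g\<^sub>\<theta>\<^sub>\<theta> = 0\<close>, \<open>\<lambda>\<^sub>0 = -1/\<rho>\<^sup>2\<close>, and the spatial block of the metric is the rank-one
  matrix \<open>x x\<^sup>T/\<rho>\<^sup>2\<close>. The time component is nonzero: \<open>a\<ddot>a \<le> \<dot>a\<^sup>2\<close> makes \<open>\<dot>a/a\<close>
  nonincreasing, which bounds the integrand of \<open>\<dot>a(\<tau>) f(\<tau>,0)\<close> by the derivative of
  \<open>a/(a(\<tau>) + \<surd>(a(\<tau>)\<^sup>2 - a\<^sup>2))\<close>, whose integral over \<open>[0,\<tau>]\<close> is \<open>1\<close>. Equality would force
  \<open>\<dot>a/a\<close> to be constant, i.e. \<open>a\<close> exponential, contradicting \<open>a(0) = 0\<close>.
\<close>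

lemma integrable_on_Icc_if_dominated:
  fixes h g :: "real \<Rightarrow> real"
  assumes "continuous_on {c<..<d} h" "g integrable_on {c..d}"
    and "\<And>x. x \<in> {c<..<d} \<Longrightarrow> \<bar>h x\<bar> \<le> g x"
  shows "h integrable_on {c..d}"
proof -
  have "h integrable_on {c<..<d}"
  proof (rule measurable_bounded_by_integrable_imp_integrable)
    show "h \<in> borel_measurable (lebesgue_on {c<..<d})"
      by (rule continuous_imp_measurable_on_sets_lebesgue[OF assms(1)]) simp
    show "g integrable_on {c<..<d}"
      using assms(2) by (simp add: integrable_on_Icc_iff_Ioo)
  qed (use assms(3) in auto)
  then show ?thesis by (simp add: integrable_on_Icc_iff_Ioo)
qed

lemma nonneg_has_integral_0_imp_0:
  fixes q :: "real \<Rightarrow> real"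
  assumes cont: "continuous_on {c<..<d} q"
    and nonneg: "\<And>x. x \<in> {c<..<d} \<Longrightarrow> 0 \<le> q x"
    and int0: "(q has_integral 0) {c..d}"
    and t: "t \<in> {c<..<d}"
  shows "q t = 0"
proof -
  define c' d' where "c' = (c + t) / 2" and "d' = (t + d) / 2"
  have sub: "{c'..d'} \<subseteq> {c<..<d}" and "c' < d'" "t \<in> {c'..d'}"
    using t by (auto simp: c'_def d'_def)
  have int0': "(q has_integral 0) {c<..<d}"
    using int0 by (simp add: has_integral_Icc_iff_Ioo)
  have int': "q integrable_on {c'..d'}"
    using integrable_on_subinterval[OF has_integral_integrable[OF int0'] sub] .
  have "integral {c'..d'} q \<le> integral {c<..<d} q"
    by (rule integral_subset_le[OF sub int' has_integral_integrable[OF int0']]) (use nonneg in auto)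
  moreover have "0 \<le> integral {c'..d'} q"
    by (rule integral_nonneg[OF int']) (use nonneg sub in auto)
  ultimately have "integral {c'..d'} q = 0"
    using integral_unique[OF int0'] by linarith
  moreover have "continuous_on {c'..d'} q"
    using cont sub by (rule continuous_on_subset)
  ultimately show "q t = 0"
    using integral_eq_0_iff[of c' d' q] \<open>c' < d'\<close> \<open>t \<in> {c'..d'}\<close> nonneg sub by blast
qed

lemma linear_ode_zero_initial_value:
  fixes y :: "real \<Rightarrow> real"
  assumes "0 < T" and cont: "continuous_on {0..T} y" and "y 0 = 0"
    and deriv: "\<And>t. 0 < t \<Longrightarrow> t < T \<Longrightarrow> (y has_real_derivative c * y t) (at t)"
  shows "y T = 0"
proof -
  define \<psi> where "\<psi> t = y t * exp (- c * t)" for t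
  have "\<psi> T = \<psi> 0"
  proof (rule DERIV_isconst_end[OF \<open>0 < T\<close>])
    show "continuous_on {0..T} \<psi>"
      unfolding \<psi>_def using cont by (intro continuous_intros)
    fix t assume "0 < t" "t < T"
    have "(\<psi> has_real_derivative c * y t * exp (- c * t) + y t * (exp (- c * t) * - c)) (at t)"
      unfolding \<psi>_def by (auto intro!: derivative_eq_intros deriv[OF \<open>0 < t\<close> \<open>t < T\<close>])
    then show "(\<psi> has_real_derivative 0) (at t)" by (simp add: algebra_simps)
  qed
  then show ?thesis using \<open>y 0 = 0\<close> by (simp add: \<psi>_def)
qed

text \<open>\<open>v / (A + \<surd>(A\<^sup>2 - v\<^sup>2)) = tan (arcsin (v/A) / 2)\<close>.\<close>

lemma DERIV_divide_add_sqrt: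
  fixes A u :: real
  assumes "\<bar>u\<bar> < A"
  shows "((\<lambda>v. v / (A + sqrt (A\<^sup>2 - v\<^sup>2))) has_real_derivative
           A / (sqrt (A\<^sup>2 - u\<^sup>2) * (A + sqrt (A\<^sup>2 - u\<^sup>2)))) (at u)"
proof -
  define s where "s = sqrt (A\<^sup>2 - u\<^sup>2)"
  have "u\<^sup>2 < A\<^sup>2"
    using power_strict_mono[of "\<bar>u\<bar>" A 2] assms by simp
  then have "0 < A\<^sup>2 - u\<^sup>2" "0 < s" and s2: "s\<^sup>2 = A\<^sup>2 - u\<^sup>2" by (simp_all add: s_def)
  have "0 < A + s" using \<open>0 < s\<close> assms by linarith
  have "((\<lambda>v. A\<^sup>2 - v\<^sup>2) has_real_derivative - (2 * u)) (at u)"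
    using DERIV_diff[OF DERIV_const DERIV_pow[of 2 u]] by simp
  from DERIV_chain2[OF DERIV_real_sqrt[OF \<open>0 < A\<^sup>2 - u\<^sup>2\<close>] this]
  have "((\<lambda>v. sqrt (A\<^sup>2 - v\<^sup>2)) has_real_derivative inverse s / 2 * - (2 * u)) (at u)"
    by (simp only: s_def)
  moreover have "inverse s / 2 * - (2 * u) = - u / s" by (simp add: field_simps)
  ultimately have "((\<lambda>v. sqrt (A\<^sup>2 - v\<^sup>2)) has_real_derivative - u / s) (at u)" by simp
  from DERIV_divide[OF DERIV_ident DERIV_add[OF DERIV_const this[unfolded s_def]]]
  have "((\<lambda>v. v / (A + sqrt (A\<^sup>2 - v\<^sup>2))) has_real_derivative
          (1 * (A + s) - u * (0 + - u / s)) / ((A + s) * (A + s))) (at u)"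
    using \<open>0 < A + s\<close> unfolding s_def by simp
  moreover have "(1 * (A + s) - u * (0 + - u / s)) / ((A + s) * (A + s)) = A / (s * (A + s))"
  proof -
    have "1 * (A + s) - u * (0 + - u / s) = (A + s) * A / s"
      using \<open>0 < s\<close> s2 by (simp add: field_simps power2_eq_square)
    then show ?thesis using \<open>0 < A + s\<close> by simp
  qed
  ultimately show ?thesis by (simp add: s_def)
qed

locale scale_factor =
  fixes a :: "real \<Rightarrow> real"
  assumes regular: "regular_scale_factor a"
begin

lemma zero [simp]: "a 0 = 0"
  using regular by (simp add: regular_scale_factor_def)

lemma less: "0 \<le> s \<Longrightarrow> s < t \<Longrightarrow> a s < a t"
  using regular by (auto simp: regular_scale_factor_def strict_mono_on_def)

lemma le: "0 \<le> s \<Longrightarrow> s \<le> t \<Longrightarrow> a s \<le> a t"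
  using less[of s t] by (cases "s = t") auto

lemma pos: "0 < t \<Longrightarrow> 0 < a t"
  using less[of 0 t] by simp

lemma nonneg: "0 \<le> t \<Longrightarrow> 0 \<le> a t"
  using le[of 0 t] by simp

lemma square_le: "0 \<le> t \<Longrightarrow> t \<le> \<tau> \<Longrightarrow> (a t)\<^sup>2 \<le> (a \<tau>)\<^sup>2"
  using le nonneg by (simp add: power_mono)

lemma sqrt_diff_square_pos: "0 \<le> t \<Longrightarrow> t < \<tau> \<Longrightarrow> 0 < sqrt ((a \<tau>)\<^sup>2 - (a t)\<^sup>2)"
  using less nonneg by (simp add: power_strict_mono)

lemma continuous_on_nonneg: "continuous_on {0..} a"
  using regular by (simp add: regular_scale_factor_def)

lemma continuous_on_Icc: "0 \<le> s \<Longrightarrow> continuous_on {s..t} a"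
  using continuous_on_nonneg by (rule continuous_on_subset) auto

lemma has_deriv: "0 < t \<Longrightarrow> (a has_real_derivative deriv a t) (at t)"
  using regular by (simp add: regular_scale_factor_def DERIV_deriv_iff_real_differentiable)

lemma has_second_deriv: "0 < t \<Longrightarrow> (deriv a has_real_derivative deriv (deriv a) t) (at t)"
  using regular by (simp add: regular_scale_factor_def DERIV_deriv_iff_real_differentiable)

lemma continuous_on_pos: "S \<subseteq> {0<..} \<Longrightarrow> continuous_on S a"
  by (intro continuous_at_imp_continuous_on ballI DERIV_isCont[OF has_deriv]) auto

lemma continuous_on_deriv: "S \<subseteq> {0<..} \<Longrightarrow> continuous_on S (deriv a)"
  by (intro continuous_at_imp_continuous_on ballI DERIV_isCont[OF has_second_deriv]) auto

lemma continuous_on_second_deriv: "S \<subseteq> {0<..} \<Longrightarrow> continuous_on S (deriv (deriv a))"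
  using regular unfolding regular_scale_factor_def by (auto elim: continuous_on_subset)

lemma deriv_pos:
  assumes "0 < t"
  shows "0 < deriv a t"
proof -
  have "\<not> deriv a t < 0"
  proof
    assume "deriv a t < 0"
    from DERIV_neg_dec_right[OF has_deriv[OF assms] this]
    obtain d where "d > 0" and dec: "\<And>h. h > 0 \<Longrightarrow> h < d \<Longrightarrow> a (t + h) < a t" by blast
    have "a (t + d/2) < a t" using dec \<open>d > 0\<close> by simp
    moreover have "a t < a (t + d/2)" using less[of t "t + d/2"] assms \<open>d > 0\<close> by simp
    ultimately show False by simp
  qed
  moreover have "deriv a t \<noteq> 0" using regular assms by (simp add: regular_scale_factor_def)
  ultimately show ?thesis by linarith
qed

lemma second_deriv_le: "0 < t \<Longrightarrow> a t * deriv (deriv a) t \<le> (deriv a t)\<^sup>2"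
  using regular deriv_pos[of t] unfolding regular_scale_factor_def
  by (auto simp: divide_le_eq)

lemma log_deriv_antimono:
  assumes "0 < t" "t \<le> \<tau>"
  shows "deriv a \<tau> / a \<tau> \<le> deriv a t / a t"
proof (rule DERIV_nonpos_imp_nonincreasing[OF \<open>t \<le> \<tau>\<close>])
  fix x assume "t \<le> x" "x \<le> \<tau>"
  then have "0 < x" "0 < a x" using assms pos by auto
  have "((\<lambda>s. deriv a s / a s) has_real_derivative
      (deriv (deriv a) x * a x - deriv a x * deriv a x) / (a x * a x)) (at x)"
    using \<open>0 < a x\<close> by (intro DERIV_divide has_second_deriv has_deriv \<open>0 < x\<close>) simp
  moreover have "(deriv (deriv a) x * a x - deriv a x * deriv a x) / (a x * a x) \<le> 0"
    using second_deriv_le[OF \<open>0 < x\<close>]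
    by (intro divide_nonpos_nonneg) (auto simp: power2_eq_square algebra_simps)
  ultimately show "\<exists>y. ((\<lambda>s. deriv a s / a s) has_real_derivative y) (at x) \<and> y \<le> 0" by blast
qed

lemma has_integral_deriv_divide_sqrt:
  assumes "0 < \<tau>"
  shows "((\<lambda>t. deriv a t / sqrt ((a \<tau>)\<^sup>2 - (a t)\<^sup>2)) has_integral pi / 2) {0..\<tau>}"
proof -
  define A where "A = a \<tau>"
  have "0 < A" using pos assms by (simp add: A_def)
  have bounded: "-1 \<le> a t / A \<and> a t / A \<le> 1" if "0 \<le> t" "t \<le> \<tau>" for t
  proof -
    have "0 \<le> a t / A" using nonneg[OF \<open>0 \<le> t\<close>] \<open>0 < A\<close> by simp
    moreover have "a t / A \<le> 1" using le[OF that] \<open>0 < A\<close> by (simp add: A_def)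
    ultimately show ?thesis by linarith
  qed
  have "((\<lambda>t. deriv a t / sqrt (A\<^sup>2 - (a t)\<^sup>2)) has_integral
          arcsin (a \<tau> / A) - arcsin (a 0 / A)) {0..\<tau>}"
  proof (rule fundamental_theorem_of_calculus_interior)
    show "continuous_on {0..\<tau>} (\<lambda>t. arcsin (a t / A))"
      using bounded \<open>0 < A\<close> by (intro continuous_intros continuous_on_Icc) auto
    fix t assume t: "t \<in> {0<..<\<tau>}"
    have "0 < a t / A" "a t / A < 1"
      using pos[of t] less[of t \<tau>] t \<open>0 < A\<close> by (auto simp: A_def)
    then have "-1 < a t / A" by linarith
    with \<open>a t / A < 1\<close> have "((\<lambda>t. arcsin (a t / A)) has_real_derivative
                 inverse (sqrt (1 - (a t / A)\<^sup>2)) * (deriv a t / A)) (at t)"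
      using t \<open>0 < A\<close> by (auto intro!: derivative_eq_intros has_deriv)
    moreover have "1 - (a t / A)\<^sup>2 = (A\<^sup>2 - (a t)\<^sup>2) / A\<^sup>2"
      using \<open>0 < A\<close> by (simp add: field_simps)
    then have "sqrt (1 - (a t / A)\<^sup>2) * A = sqrt (A\<^sup>2 - (a t)\<^sup>2)"
      using \<open>0 < A\<close> by (simp add: real_sqrt_divide)
    then have "inverse (sqrt (1 - (a t / A)\<^sup>2)) * (deriv a t / A) = deriv a t / sqrt (A\<^sup>2 - (a t)\<^sup>2)"
      by (auto simp: field_simps)
    ultimately show "((\<lambda>t. arcsin (a t / A)) has_vector_derivative
                        deriv a t / sqrt (A\<^sup>2 - (a t)\<^sup>2)) (at t)"
      by (simp add: has_real_derivative_iff_has_vector_derivative)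
  qed (use assms in simp)
  then show ?thesis using \<open>0 < A\<close> by (simp add: A_def)
qed

lemma continuous_on_rho_integrand:
  "continuous_on {0<..<\<tau>} (\<lambda>t. a t / sqrt ((a \<tau>)\<^sup>2 - (a t)\<^sup>2))"
proof (intro continuous_intros continuous_on_pos ballI)
  fix t assume "t \<in> {0<..<\<tau>}"
  then show "sqrt ((a \<tau>)\<^sup>2 - (a t)\<^sup>2) \<noteq> 0" using sqrt_diff_square_pos[of t \<tau>] by simp
qed auto

lemma integrable_rho_integrand:
  assumes "0 < \<tau>"
  shows "(\<lambda>t. a t / sqrt ((a \<tau>)\<^sup>2 - (a t)\<^sup>2)) integrable_on {0..\<tau>}"
proof (rule integrable_on_Icc_if_dominated[OF continuous_on_rho_integrand])
  show "(\<lambda>t. a \<tau> / deriv a \<tau> * (deriv a t / sqrt ((a \<tau>)\<^sup>2 - (a t)\<^sup>2))) integrable_on {0..\<tau>}"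
    using has_integral_deriv_divide_sqrt[OF assms] by (intro integrable_on_mult_right) blast
next
  fix t assume t: "t \<in> {0<..<\<tau>}"
  then have "0 < a t" and r: "0 < sqrt ((a \<tau>)\<^sup>2 - (a t)\<^sup>2)"
    using pos sqrt_diff_square_pos[of t \<tau>] by auto
  have "a t \<le> a \<tau> / deriv a \<tau> * deriv a t"
    using log_deriv_antimono[of t \<tau>] \<open>0 < a t\<close> pos[OF assms] deriv_pos[OF assms] t
    by (simp add: field_simps)
  then have "a t / sqrt ((a \<tau>)\<^sup>2 - (a t)\<^sup>2)
      \<le> (a \<tau> / deriv a \<tau> * deriv a t) / sqrt ((a \<tau>)\<^sup>2 - (a t)\<^sup>2)"
    using r by (intro divide_right_mono) auto
  then show "\<bar>a t / sqrt ((a \<tau>)\<^sup>2 - (a t)\<^sup>2)\<bar>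
      \<le> a \<tau> / deriv a \<tau> * (deriv a t / sqrt ((a \<tau>)\<^sup>2 - (a t)\<^sup>2))"
    using \<open>0 < a t\<close> r by simp
qed

lemma rho_M_pos:
  assumes "0 < \<tau>"
  shows "0 < rho_M a \<tau>"
proof -
  let ?F = "\<lambda>t. a t / sqrt ((a \<tau>)\<^sup>2 - (a t)\<^sup>2)"
  have int: "(?F has_integral rho_M a \<tau>) {0..\<tau>}"
    unfolding rho_M_def using integrable_rho_integrand[OF assms] by (rule integrable_integral)
  have F_nonneg: "0 \<le> ?F t" if "t \<in> {0..\<tau>}" for t
    using nonneg[of t] square_le[of t \<tau>] that by simp
  have "0 < ?F (\<tau> / 2)"
    using pos[of "\<tau> / 2"] sqrt_diff_square_pos[of "\<tau> / 2" \<tau>] assms by simp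
  have "rho_M a \<tau> \<noteq> 0"
  proof
    assume "rho_M a \<tau> = 0"
    then have "?F (\<tau> / 2) = 0"
      by (intro nonneg_has_integral_0_imp_0[OF continuous_on_rho_integrand])
        (use int F_nonneg assms in auto)
    with \<open>0 < ?F (\<tau> / 2)\<close> show False by simp
  qed
  moreover have "0 \<le> rho_M a \<tau>"
    using has_integral_nonneg[OF int F_nonneg] .
  ultimately show ?thesis by linarith
qed

lemma integrable_chi_integrand:
  assumes "0 < s" "s \<le> \<tau>"
  shows "(\<lambda>t. 1 / a t * (a \<tau> / sqrt ((a \<tau>)\<^sup>2 - (a t)\<^sup>2))) integrable_on {s..\<tau>}"
proof (rule integrable_on_Icc_if_dominated)
  show "continuous_on {s<..<\<tau>} (\<lambda>t. 1 / a t * (a \<tau> / sqrt ((a \<tau>)\<^sup>2 - (a t)\<^sup>2)))"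
  proof (intro continuous_intros continuous_on_pos ballI)
    fix t assume "t \<in> {s<..<\<tau>}"
    then show "a t \<noteq> 0" "sqrt ((a \<tau>)\<^sup>2 - (a t)\<^sup>2) \<noteq> 0"
      using assms pos[of t] sqrt_diff_square_pos[of t \<tau>] by auto
  qed (use assms in auto)
  have "(\<lambda>t. a t / sqrt ((a \<tau>)\<^sup>2 - (a t)\<^sup>2)) integrable_on {s..\<tau>}"
    using integrable_on_subinterval[OF integrable_rho_integrand] assms by auto
  then show "(\<lambda>t. a \<tau> / (a s)\<^sup>2 * (a t / sqrt ((a \<tau>)\<^sup>2 - (a t)\<^sup>2))) integrable_on {s..\<tau>}"
    by (rule integrable_on_mult_right)
next
  fix t assume t: "t \<in> {s<..<\<tau>}"
  then have "0 < a t" "0 < sqrt ((a \<tau>)\<^sup>2 - (a t)\<^sup>2)" "(a s)\<^sup>2 \<le> (a t)\<^sup>2" "0 < a s"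
    using assms pos sqrt_diff_square_pos[of t \<tau>] square_le[of s t] by auto
  then show "\<bar>1 / a t * (a \<tau> / sqrt ((a \<tau>)\<^sup>2 - (a t)\<^sup>2))\<bar>
      \<le> a \<tau> / (a s)\<^sup>2 * (a t / sqrt ((a \<tau>)\<^sup>2 - (a t)\<^sup>2))"
    using nonneg[of \<tau>] assms
    by (simp add: field_simps power2_eq_square mult_left_mono mult_right_mono)
qed

lemma chi_nonneg:
  assumes "0 < s" "s \<le> \<tau>"
  shows "0 \<le> chi a s \<tau>"
  unfolding chi_def
proof (rule integral_nonneg[OF integrable_chi_integrand[OF assms]])
  fix t assume "t \<in> {s..\<tau>}"
  then show "0 \<le> 1 / a t * (a \<tau> / sqrt ((a \<tau>)\<^sup>2 - (a t)\<^sup>2))"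
    using assms pos[of t] nonneg[of \<tau>] square_le[of t \<tau>]
    by (intro mult_nonneg_nonneg divide_nonneg_nonneg) auto
qed

lemma scaled_chi_le:
  assumes "0 < s" "s \<le> \<delta>" "\<delta> \<le> \<tau> / 2"
  shows "a s * chi a s \<tau> \<le> \<delta> * (a \<tau> / sqrt ((a \<tau>)\<^sup>2 - (a (\<tau> / 2))\<^sup>2)) + a s * chi a \<delta> \<tau>"
proof -
  define u where "u t = 1 / a t * (a \<tau> / sqrt ((a \<tau>)\<^sup>2 - (a t)\<^sup>2))" for t
  define B where "B = a \<tau> / sqrt ((a \<tau>)\<^sup>2 - (a (\<tau> / 2))\<^sup>2)"
  have "0 < a s" "0 < \<tau>" using assms pos by auto
  have r: "0 < sqrt ((a \<tau>)\<^sup>2 - (a (\<tau> / 2))\<^sup>2)"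
    using sqrt_diff_square_pos[of "\<tau> / 2" \<tau>] \<open>0 < \<tau>\<close> by simp
  then have "0 \<le> B" using nonneg[of \<tau>] \<open>0 < \<tau>\<close> by (simp add: B_def)
  have int: "u integrable_on {s..\<tau>}"
    using integrable_chi_integrand[of s \<tau>] assms by (simp add: u_def[abs_def])
  have split: "chi a s \<tau> = integral {s..\<delta>} u + chi a \<delta> \<tau>"
    unfolding chi_def u_def[symmetric] using assms int
    by (intro Henstock_Kurzweil_Integration.integral_combine[symmetric]) auto
  have u_le: "u t \<le> B / a s" if "t \<in> {s..\<delta>}" for t
  proof -
    have "0 < a t" "a s \<le> a t" using that assms pos le[of s t] by auto
    then have "1 / a t \<le> 1 / a s" using \<open>0 < a s\<close> by (simp add: frac_le)
    moreover have "sqrt ((a \<tau>)\<^sup>2 - (a (\<tau> / 2))\<^sup>2) \<le> sqrt ((a \<tau>)\<^sup>2 - (a t)\<^sup>2)"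
      using square_le[of t "\<tau> / 2"] that assms by auto
    then have "a \<tau> / sqrt ((a \<tau>)\<^sup>2 - (a t)\<^sup>2) \<le> B"
      unfolding B_def using r nonneg[of \<tau>] \<open>0 < \<tau>\<close> by (intro divide_left_mono) auto
    moreover have "0 \<le> a \<tau> / sqrt ((a \<tau>)\<^sup>2 - (a t)\<^sup>2)"
      using nonneg[of \<tau>] square_le[of t \<tau>] that assms by simp
    ultimately have "u t \<le> 1 / a s * B"
      unfolding u_def using \<open>0 < a s\<close> by (intro mult_mono) simp_all
    then show ?thesis by simp
  qed
  have "integral {s..\<delta>} u \<le> integral {s..\<delta>} (\<lambda>_. B / a s)"
    using integrable_on_subinterval[OF int] assms u_le by (intro integral_le) auto
  also have "\<dots> = (\<delta> - s) * (B / a s)" using assms by simp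
  finally have "a s * integral {s..\<delta>} u \<le> (\<delta> - s) * B"
    using \<open>0 < a s\<close> by (simp add: field_simps)
  also have "\<dots> \<le> \<delta> * B" using \<open>0 \<le> B\<close> \<open>0 < s\<close> by (simp add: mult_right_mono)
  finally show ?thesis unfolding split B_def by (simp add: distrib_left)
qed

lemma tendsto_at_right_0: "(a \<longlongrightarrow> 0) (at_right 0)"
proof -
  have "(a \<longlongrightarrow> a 0) (at 0 within {0..})"
    using continuous_on_nonneg by (auto simp: continuous_on_def dest: bspec[of _ _ 0])
  then have "(a \<longlongrightarrow> a 0) (at_right 0)"
    by (rule tendsto_mono[OF at_le, rotated]) auto
  then show ?thesis by simp
qed

lemma scaled_chi_tendsto_0:
  assumes "0 < \<tau>"
  shows "((\<lambda>s. a s * chi a s \<tau>) \<longlongrightarrow> 0) (at_right 0)"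
proof (rule tendstoI)
  fix \<epsilon> :: real assume "0 < \<epsilon>"
  define B where "B = a \<tau> / sqrt ((a \<tau>)\<^sup>2 - (a (\<tau> / 2))\<^sup>2)"
  have "0 \<le> B"
    using nonneg[of \<tau>] square_le[of "\<tau> / 2" \<tau>] assms by (simp add: B_def)
  define \<delta> where "\<delta> = min (\<tau> / 2) (\<epsilon> / (2 * (B + 1)))"
  have "0 < \<delta>"
    using assms \<open>0 < \<epsilon>\<close> \<open>0 \<le> B\<close> by (auto simp: \<delta>_def)
  have "\<delta> \<le> \<tau> / 2"
    unfolding \<delta>_def by (rule min.cobounded1)
  have "\<delta> * B \<le> \<epsilon> / (2 * (B + 1)) * B"
    using \<open>0 \<le> B\<close> by (intro mult_right_mono) (auto simp: \<delta>_def)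
  also have "\<dots> < \<epsilon> / 2"
    using \<open>0 \<le> B\<close> \<open>0 < \<epsilon>\<close> by (simp add: field_simps)
  finally have "\<delta> * B < \<epsilon> / 2" .
  have "((\<lambda>s. a s * chi a \<delta> \<tau>) \<longlongrightarrow> 0) (at_right 0)"
    using tendsto_mult_right[OF tendsto_at_right_0] by simp
  then have "\<forall>\<^sub>F s in at_right 0. a s * chi a \<delta> \<tau> < \<epsilon> / 2"
    by (rule order_tendstoD(2)) (use \<open>0 < \<epsilon>\<close> in simp)
  moreover have "\<forall>\<^sub>F s in at_right 0. s \<in> {0<..<\<delta>}"
    using eventually_at_right_real[OF \<open>0 < \<delta>\<close>] .
  ultimately show "\<forall>\<^sub>F s in at_right 0. dist (a s * chi a s \<tau>) 0 < \<epsilon>"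
  proof eventually_elim
    case (elim s)
    then have "0 \<le> a s * chi a s \<tau>"
      using \<open>\<delta> \<le> \<tau> / 2\<close> by (auto intro!: mult_nonneg_nonneg less_imp_le[OF pos] chi_nonneg)
    moreover have "a s * chi a s \<tau> \<le> \<delta> * B + a s * chi a \<delta> \<tau>"
      using scaled_chi_le[of s \<delta> \<tau>] elim \<open>\<delta> \<le> \<tau> / 2\<close> by (simp add: B_def)
    ultimately show ?case using elim \<open>\<delta> * B < \<epsilon> / 2\<close> by simp
  qed
qed

lemma g_thth_M_eq_0:
  assumes even: "\<And>t. a (- t) = a t" and "0 < \<tau>"
  shows "g_thth_M a \<tau> = 0"
proof -
  define \<psi> where "\<psi> s = (a s * chi a s \<tau>)\<^sup>2" for s
  have "(\<psi> \<longlongrightarrow> 0) (at_right 0)"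
    using tendsto_power[OF scaled_chi_tendsto_0[OF \<open>0 < \<tau>\<close>], of 2] by (simp add: \<psi>_def[abs_def])
  then have right: "((\<lambda>t. \<psi> \<bar>t\<bar>) \<longlongrightarrow> 0) (at_right 0)"
    by (rule Lim_transform_eventually) (auto intro: eventually_mono[OF eventually_at_right_less])
  have "((\<lambda>t. \<psi> \<bar>t\<bar>) \<longlongrightarrow> 0) (at 0)"
    using right by (intro filterlim_split_at) (simp_all add: filterlim_at_left_to_right)
  moreover have "(a t)\<^sup>2 * (chi a \<bar>t\<bar> \<tau>)\<^sup>2 = \<psi> \<bar>t\<bar>" for t
    using even[of t] by (cases "t < 0") (simp_all add: \<psi>_def power_mult_distrib)
  ultimately show ?thesis
    unfolding g_thth_M_def by (intro tendsto_Lim) simp_all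
qed

text \<open>
  The derivative of \<open>a / (a(\<tau>) + \<surd>(a(\<tau>)\<^sup>2 - a\<^sup>2))\<close>, which rises from \<open>0\<close> to \<open>1\<close> on \<open>[0,\<tau>]\<close>:
  it dominates \<open>\<dot>a(\<tau>)\<close> times the integrand of \<open>f(\<tau>,0)\<close>.
\<close>

definition comparison_kernel :: "real \<Rightarrow> real \<Rightarrow> real" where
  "comparison_kernel \<tau> t =
     a \<tau> / (sqrt ((a \<tau>)\<^sup>2 - (a t)\<^sup>2) * (a \<tau> + sqrt ((a \<tau>)\<^sup>2 - (a t)\<^sup>2))) * deriv a t"

definition f_integrand :: "real \<Rightarrow> real \<Rightarrow> real" where
  "f_integrand \<tau> t = deriv (deriv a) t / (deriv a t)\<^sup>2 * (a \<tau> / sqrt ((a \<tau>)\<^sup>2 - (a t)\<^sup>2) - 1)"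

lemma f_fun_0_eq: "0 \<le> \<tau> \<Longrightarrow> f_fun a \<tau> 0 = integral {0..\<tau>} (f_integrand \<tau>)"
  using nonneg[of \<tau>] unfolding f_fun_def f_integrand_def by simp

lemma has_integral_comparison_kernel:
  assumes "0 < \<tau>"
  shows "(comparison_kernel \<tau> has_integral 1) {0..\<tau>}"
proof -
  define \<Phi> where "\<Phi> t = a t / (a \<tau> + sqrt ((a \<tau>)\<^sup>2 - (a t)\<^sup>2))" for t
  have "0 < a \<tau>" using pos[OF assms] .
  have "(comparison_kernel \<tau> has_integral \<Phi> \<tau> - \<Phi> 0) {0..\<tau>}"
  proof (rule fundamental_theorem_of_calculus_interior)
    show "continuous_on {0..\<tau>} \<Phi>"
      unfolding \<Phi>_def
    proof (intro continuous_intros continuous_on_Icc ballI)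
      fix t assume "t \<in> {0..\<tau>}"
      then have "0 \<le> sqrt ((a \<tau>)\<^sup>2 - (a t)\<^sup>2)" using square_le[of t \<tau>] by simp
      then show "a \<tau> + sqrt ((a \<tau>)\<^sup>2 - (a t)\<^sup>2) \<noteq> 0" using \<open>0 < a \<tau>\<close> by linarith
    qed auto
    fix t assume t: "t \<in> {0<..<\<tau>}"
    then have "\<bar>a t\<bar> < a \<tau>" using pos[of t] less[of t \<tau>] by auto
    from DERIV_chain2[OF DERIV_divide_add_sqrt[OF this] has_deriv]
    show "(\<Phi> has_vector_derivative comparison_kernel \<tau> t) (at t)"
      using t by (simp add: \<Phi>_def[abs_def] comparison_kernel_def has_real_derivative_iff_has_vector_derivative)
  qed (use assms in simp)
  moreover have "\<Phi> \<tau> = 1" "\<Phi> 0 = 0" using \<open>0 < a \<tau>\<close> by (simp_all add: \<Phi>_def)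
  ultimately show ?thesis by simp
qed

lemma continuous_on_comparison_kernel_minus_f_integrand:
  "continuous_on {0<..<\<tau>} (\<lambda>t. comparison_kernel \<tau> t - c * f_integrand \<tau> t)"
  unfolding comparison_kernel_def f_integrand_def
proof (intro continuous_intros continuous_on_pos continuous_on_deriv continuous_on_second_deriv ballI)
  fix t assume "t \<in> {0<..<\<tau>}"
  then have r: "0 < sqrt ((a \<tau>)\<^sup>2 - (a t)\<^sup>2)" and "0 < a \<tau>" "0 < deriv a t"
    using sqrt_diff_square_pos[of t \<tau>] pos[of \<tau>] deriv_pos[of t] by auto
  then show "sqrt ((a \<tau>)\<^sup>2 - (a t)\<^sup>2) \<noteq> 0" "(deriv a t)\<^sup>2 \<noteq> 0"
    by simp_all
  have "0 < sqrt ((a \<tau>)\<^sup>2 - (a t)\<^sup>2) * (a \<tau> + sqrt ((a \<tau>)\<^sup>2 - (a t)\<^sup>2))"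
    using r \<open>0 < a \<tau>\<close> by (intro mult_pos_pos add_pos_pos)
  then show "sqrt ((a \<tau>)\<^sup>2 - (a t)\<^sup>2) * (a \<tau> + sqrt ((a \<tau>)\<^sup>2 - (a t)\<^sup>2)) \<noteq> 0"
    by linarith
qed auto

lemma f_integrand_le_comparison_kernel:
  assumes "0 < t" "t < \<tau>"
  shows "deriv a \<tau> * f_integrand \<tau> t \<le> comparison_kernel \<tau> t"
    and "deriv a \<tau> * f_integrand \<tau> t = comparison_kernel \<tau> t \<Longrightarrow>
         deriv a t = deriv a \<tau> / a \<tau> * a t"
proof -
  define A r d where "A = a \<tau>" and "r = sqrt (A\<^sup>2 - (a t)\<^sup>2)" and "d = deriv a \<tau>"
  define h where "h = A / r - 1"
  have "0 < a t" "a t < A" "0 < d" "0 < deriv a t"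
    using assms pos less deriv_pos by (auto simp: A_def d_def)
  have "(a t)\<^sup>2 < A\<^sup>2" using \<open>0 < a t\<close> \<open>a t < A\<close> by (simp add: power_strict_mono)
  then have "0 < r" and r2: "r\<^sup>2 = A\<^sup>2 - (a t)\<^sup>2" by (simp_all add: r_def)
  have "r < A"
    unfolding r_def using \<open>0 < a t\<close> \<open>a t < A\<close> by (intro real_less_lsqrt) simp_all
  then have "0 < h" using \<open>0 < r\<close> by (simp add: h_def)
  have f: "f_integrand \<tau> t = deriv (deriv a) t / (deriv a t)\<^sup>2 * h"
    by (simp add: f_integrand_def h_def r_def A_def)
  have k: "comparison_kernel \<tau> t = deriv a t * A / (a t)\<^sup>2 * h"
  proof -
    have "0 < r * (A + r)" using \<open>0 < r\<close> \<open>r < A\<close> by simp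
    then have "r \<noteq> 0" "r * (A + r) \<noteq> 0" "A * r + r * r \<noteq> 0"
      using \<open>0 < r\<close> by (simp_all add: algebra_simps)
    then have "A / (r * (A + r)) * deriv a t * ((A - r) * (A + r)) = deriv a t * A * ((A - r) / r)"
      by (simp add: field_simps)
    moreover have "(A - r) * (A + r) = (a t)\<^sup>2"
      using r2 by (simp add: power2_eq_square algebra_simps)
    moreover have "(A - r) / r = h"
      using \<open>0 < r\<close> by (simp add: h_def diff_divide_distrib)
    ultimately have "A / (r * (A + r)) * deriv a t = deriv a t * A * h / (a t)\<^sup>2"
      using \<open>0 < a t\<close> by (simp add: eq_divide_eq)
    then show ?thesis by (simp add: comparison_kernel_def r_def A_def)
  qed
  have "deriv (deriv a) t / (deriv a t)\<^sup>2 \<le> 1 / a t"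
    using second_deriv_le[OF \<open>0 < t\<close>] \<open>0 < a t\<close> \<open>0 < deriv a t\<close> by (simp add: field_simps)
  then have "deriv (deriv a) t / (deriv a t)\<^sup>2 * h \<le> 1 / a t * h"
    by (rule mult_right_mono) (use \<open>0 < h\<close> in simp)
  then have le1: "d * f_integrand \<tau> t \<le> d / a t * h"
    unfolding f using mult_left_mono[OF _ less_imp_le[OF \<open>0 < d\<close>]] by fastforce
  have "d / A \<le> deriv a t / a t"
    using log_deriv_antimono[of t \<tau>] assms by (simp add: A_def d_def)
  then have "d / a t \<le> deriv a t * A / (a t)\<^sup>2"
    using \<open>0 < a t\<close> \<open>a t < A\<close> by (simp add: field_simps power2_eq_square)
  then have le2: "d / a t * h \<le> comparison_kernel \<tau> t"
    unfolding k by (rule mult_right_mono) (use \<open>0 < h\<close> in simp)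
  from le1 le2 show "deriv a \<tau> * f_integrand \<tau> t \<le> comparison_kernel \<tau> t"
    by (simp add: d_def)
  show "deriv a t = deriv a \<tau> / a \<tau> * a t"
    if "deriv a \<tau> * f_integrand \<tau> t = comparison_kernel \<tau> t"
  proof -
    have "d / a t * h = deriv a t * A / (a t)\<^sup>2 * h"
      using le1 le2 that k by (simp add: d_def)
    then have "d / a t = deriv a t * A / (a t)\<^sup>2"
      using mult_right_cancel[of h] \<open>0 < h\<close> by blast
    then show ?thesis
      using \<open>0 < a t\<close> \<open>a t < A\<close> by (simp add: A_def d_def field_simps power2_eq_square)
  qed
qed

lemma g_tautau_M_neq_0:
  assumes "0 < \<tau>"
  shows "g_tautau_M a \<tau> \<noteq> 0"
proof (cases "f_integrand \<tau> integrable_on {0..\<tau>}")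
  case False
  \<comment> \<open>\<open>f_fun\<close> is a Henstock--Kurzweil integral, so here it takes the junk value \<open>0\<close>.\<close>
  then show ?thesis
    using assms by (simp add: g_tautau_M_def f_fun_0_eq not_integrable_integral)
next
  case True
  define d where "d = deriv a \<tau>"
  define q where "q t = comparison_kernel \<tau> t - d * f_integrand \<tau> t" for t
  have "d * f_fun a \<tau> 0 \<noteq> 1"
  proof
    assume "d * f_fun a \<tau> 0 = 1"
    then have "(q has_integral 0) {0..\<tau>}"
      using has_integral_diff[OF has_integral_comparison_kernel[OF assms]
          has_integral_mult_right[OF integrable_integral[OF True], of d]] assms
      by (simp add: q_def[abs_def] f_fun_0_eq)
    moreover have "continuous_on {0<..<\<tau>} q"
      unfolding q_def[abs_def] by (rule continuous_on_comparison_kernel_minus_f_integrand)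
    moreover have "0 \<le> q t" if "t \<in> {0<..<\<tau>}" for t
      using f_integrand_le_comparison_kernel(1)[of t \<tau>] that by (simp add: q_def d_def)
    ultimately have "q t = 0" if "t \<in> {0<..<\<tau>}" for t
      using nonneg_has_integral_0_imp_0 that by blast
    then have linear: "(a has_real_derivative d / a \<tau> * a t) (at t)" if "0 < t" "t < \<tau>" for t
      using has_deriv[OF \<open>0 < t\<close>] f_integrand_le_comparison_kernel(2)[OF that] that
      by (simp add: q_def d_def)
    have "a \<tau> = 0"
      by (rule linear_ode_zero_initial_value[OF assms continuous_on_Icc[OF order_refl] zero linear])
    with pos[OF assms] show False by simp
  qed
  then show ?thesis by (simp add: g_tautau_M_def d_def)
qed

end

lemma vector_4 [simp]:
  "(vector [x1, x2, x3, x4] :: 'a::zero^4) $ 1 = x1"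
  "(vector [x1, x2, x3, x4] :: 'a::zero^4) $ 2 = x2"
  "(vector [x1, x2, x3, x4] :: 'a::zero^4) $ 3 = x3"
  "(vector [x1, x2, x3, x4] :: 'a::zero^4) $ 4 = x4"
  unfolding vector_def by simp_all

text \<open>On the sphere of radius \<open>\<rho>\<close>, \<open>\<lambda> = -1/\<rho>\<^sup>2\<close> turns the spatial block into \<open>x x\<^sup>T/\<rho>\<^sup>2\<close>.\<close>

lemma rank_metric_matrix_on_sphere:
  fixes g x y z \<rho> :: real
  assumes "g \<noteq> 0" "\<rho> \<noteq> 0" and sphere: "x\<^sup>2 + y\<^sup>2 + z\<^sup>2 = \<rho>\<^sup>2"
  shows "rank (metric_matrix g (- 1 / \<rho>\<^sup>2) x y z) = 2"
proof -
  define M where "M = metric_matrix g (- 1 / \<rho>\<^sup>2) x y z"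
  define e w :: "real^4" where "e = vector [g, 0, 0, 0]" and "w = vector [0, x, y, z]"
  have "0 < \<rho>\<^sup>2" using \<open>\<rho> \<noteq> 0\<close> by simp
  have diag: "1 - (\<rho>\<^sup>2 - u\<^sup>2) / \<rho>\<^sup>2 = u * u / \<rho>\<^sup>2" for u
    using \<open>\<rho> \<noteq> 0\<close> by (simp add: diff_divide_distrib power2_eq_square)
  have "y\<^sup>2 + z\<^sup>2 = \<rho>\<^sup>2 - x\<^sup>2" "x\<^sup>2 + z\<^sup>2 = \<rho>\<^sup>2 - y\<^sup>2" "x\<^sup>2 + y\<^sup>2 = \<rho>\<^sup>2 - z\<^sup>2"
    using sphere by linarith+
  then have "1 - (y\<^sup>2 + z\<^sup>2) / \<rho>\<^sup>2 = x * x / \<rho>\<^sup>2" "1 - (x\<^sup>2 + z\<^sup>2) / \<rho>\<^sup>2 = y * y / \<rho>\<^sup>2"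
    "1 - (x\<^sup>2 + y\<^sup>2) / \<rho>\<^sup>2 = z * z / \<rho>\<^sup>2"
    by (simp_all only: diag)
  then have "M $ 1 = e" "M $ 2 = (x / \<rho>\<^sup>2) *\<^sub>R w" "M $ 3 = (y / \<rho>\<^sup>2) *\<^sub>R w" "M $ 4 = (z / \<rho>\<^sup>2) *\<^sub>R w"
    by (simp_all add: M_def metric_matrix_def e_def w_def vec_eq_iff forall_4)
  moreover have "rows M = {M $ 1, M $ 2, M $ 3, M $ 4}"
    by (auto simp: rows_def row_def vec_lambda_eta UNIV_4)
  ultimately have rows: "rows M = {e, (x / \<rho>\<^sup>2) *\<^sub>R w, (y / \<rho>\<^sup>2) *\<^sub>R w, (z / \<rho>\<^sup>2) *\<^sub>R w}"
    by simp
  have "x \<noteq> 0 \<or> y \<noteq> 0 \<or> z \<noteq> 0" using sphere \<open>0 < \<rho>\<^sup>2\<close> by auto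
  then have "\<exists>c\<in>{x / \<rho>\<^sup>2, y / \<rho>\<^sup>2, z / \<rho>\<^sup>2}. c \<noteq> 0" using \<open>\<rho> \<noteq> 0\<close> by auto
  then obtain c where "c \<noteq> 0" "c *\<^sub>R w \<in> rows M" unfolding rows by blast
  then have "w \<in> span (rows M)"
    using span_scale[OF span_base[OF \<open>c *\<^sub>R w \<in> rows M\<close>], of "1 / c"] by simp
  then have "span (rows M) = span {e, w}"
    unfolding span_eq by (auto simp: rows span_base span_scale)
  moreover have "independent {e, w}" "e \<noteq> w"
  proof -
    have "w \<noteq> 0" using sphere \<open>0 < \<rho>\<^sup>2\<close> by (auto simp: w_def vec_eq_iff forall_4)
    moreover have "e \<notin> span {w}"
      using \<open>g \<noteq> 0\<close> by (auto simp: span_singleton e_def w_def vec_eq_iff forall_4)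
    ultimately show "independent {e, w}" "e \<noteq> w"
      by (auto simp: independent_insert span_base)
  qed
  ultimately have "dim (rows M) = 2"
    by (metis dim_span dim_span_eq_card_independent card_2_iff)
  then show ?thesis by (simp add: row_rank_def M_def)
qed

theorem corollary7p8:
  fixes a :: "real \<Rightarrow> real"
  assumes "regular_scale_factor a"
    and "\<forall>t. a (- t) = a t"
    and "(\<exists>L. 0 < L \<and> (deriv a \<longlongrightarrow> L) (at_right 0))
         \<or> ((a has_real_derivative 0) (at 0) \<and>
            (\<exists>n. has_nth_deriv_at a n 0 \<and> (deriv ^^ n) a 0 \<noteq> 0))"
  shows "\<forall>\<tau> x y z. \<tau> > 0 \<and> sqrt (x\<^sup>2 + y\<^sup>2 + z\<^sup>2) = rho_M a \<tau> \<longrightarrow>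
           rank (metric_matrix (g_tautau_M a \<tau>) (lambda0_M a \<tau>) x y z) = 2"
proof (intro allI impI, elim conjE)
  interpret scale_factor a by (rule scale_factor.intro) fact
  fix \<tau> x y z :: real
  assume "0 < \<tau>" and radius: "sqrt (x\<^sup>2 + y\<^sup>2 + z\<^sup>2) = rho_M a \<tau>"
  have "rho_M a \<tau> \<noteq> 0" using rho_M_pos[OF \<open>0 < \<tau>\<close>] by simp
  have sphere: "x\<^sup>2 + y\<^sup>2 + z\<^sup>2 = (rho_M a \<tau>)\<^sup>2"
    using arg_cong[OF radius, of power2] by simp
  have "lambda0_M a \<tau> = - 1 / (rho_M a \<tau>)\<^sup>2"
    using g_thth_M_eq_0[OF _ \<open>0 < \<tau>\<close>] assms(2) \<open>rho_M a \<tau> \<noteq> 0\<close>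
    by (simp add: lambda0_M_def power4_eq_xxxx power2_eq_square)
  then show "rank (metric_matrix (g_tautau_M a \<tau>) (lambda0_M a \<tau>) x y z) = 2"
    using rank_metric_matrix_on_sphere[OF g_tautau_M_neq_0 \<open>rho_M a \<tau> \<noteq> 0\<close> sphere] \<open>0 < \<tau>\<close>
    by simp
qed

end
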